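(* For $n\geq0$ let $$D_n=\Big\{F:\mathbb{C}\to\mathbb{C}\text{ additive}\ \Big|\ F(\alpha^{n+1})=\sum_{i=1}^{n}\binom{n+1}{i}(-1)^{n-i}\,\alpha^{n+1-i}\,F(\alpha^i)\text{ for all }\alpha\in\mathbb{C}\Big\}$$ (so $D_0=\{0\}$ and $D_1$ is the set of derivations of $\mathbb{C}$). Then for every $n\geq1$, $D_n\subseteq D_{n+1}$. Moreover, if $D$ is a non-trivial derivation on $\mathbb{C}$, then the $(n+1)$-fold composition $D^{n+1}=D\circ\cdots\circ D$ belongs to $D_{n+1}\setminus D_n$.
   Context: A derivation on $\mathbb{C}$ is an additive map $D:\mathbb{C}\to\mathbb{C}$ with $D(xy)=xD(y)+yD(x)$. *)

theory Defs
  imports Complex_Main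
begin

definition additive_map :: "(complex \<Rightarrow> complex) \<Rightarrow> bool" where
  "additive_map F \<longleftrightarrow> (\<forall>x y. F (x + y) = F x + F y)"

definition derivation :: "(complex \<Rightarrow> complex) \<Rightarrow> bool" where
  "derivation D \<longleftrightarrow> additive_map D \<and> (\<forall>x y. D (x * y) = x * D y + y * D x)"

definition Dset :: "nat \<Rightarrow> (complex \<Rightarrow> complex) set" where
  "Dset n = {F. additive_map F \<and>
     (\<forall>\<alpha>. F (\<alpha> ^ (n + 1)) =
        (\<Sum>i = 1..n. of_nat ((n + 1) choose i) * (-1) ^ (n - i) * \<alpha> ^ (n + 1 - i) * F (\<alpha> ^ i)))}"

end

theory Submission
  imports Defs
begin

text \<open>Write \<open>T\<^sub>a F = commutator a F = F (a \<cdot> _) - a F\<close>. Expanding \<open>T\<^sub>a\<^sup>n\<^sup>+\<^sup>1 F\<close> binomially shows that an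
  additive \<open>F\<close> with \<open>F 1 = 0\<close> lies in \<open>D\<^sub>n\<close> iff \<open>(T\<^sub>a\<^sup>n\<^sup>+\<^sup>1 F) 1 = 0\<close> for all \<open>a\<close>.
  For the inclusion, \<open>(T\<^sub>a\<^sub>+\<^sub>t\<^sub>b\<^sup>n\<^sup>+\<^sup>1 F) 1\<close> is a polynomial in \<open>t\<close> vanishing on all naturals,
  so its linear coefficient \<open>(n+1) (T\<^sub>b T\<^sub>a\<^sup>n F) 1\<close> vanishes; hence \<open>G = T\<^sub>a\<^sup>n F\<close> satisfies
  \<open>G b = b G 1\<close>, and then \<open>(T\<^sub>a\<^sup>2 G) 1 = 0\<close>.
  For a derivation \<open>D\<close>, the Leibniz rule shows that \<open>T\<^sub>a\<close> maps a linear combination of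
  \<open>D\<^sup>0, \<dots>, D\<^sup>q\<close> to one of \<open>D\<^sup>0, \<dots>, D\<^sup>q\<^sup>-\<^sup>1\<close>, multiplying the leading coefficient by
  \<open>q D a\<close>. Thus \<open>T\<^sub>a\<^sup>m D\<^sup>m\<close> is multiplication by \<open>m! (D a)\<^sup>m\<close>, which is killed by one more
  \<open>T\<^sub>a\<close> but does not vanish at \<open>1\<close> when \<open>D a \<noteq> 0\<close>.\<close>

lemma binomial_sum_pascal_step:
  fixes A :: "nat \<Rightarrow> nat \<Rightarrow> 'a::comm_ring_1"
  shows "(\<Sum>i\<le>k. of_nat (k choose i) * A (Suc i) (k - i)) + (\<Sum>i\<le>k. of_nat (k choose i) * A i (Suc k - i))
       = (\<Sum>i\<le>Suc k. of_nat (Suc k choose i) * A i (Suc k - i))"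
proof -
  have "(\<Sum>i\<le>k. of_nat (k choose i) * A i (Suc k - i)) = (\<Sum>i\<le>Suc k. of_nat (k choose i) * A i (Suc k - i))"
    by (simp add: binomial_eq_0)
  also have "\<dots> = A 0 (Suc k) + (\<Sum>i\<le>k. of_nat (k choose Suc i) * A (Suc i) (k - i))"
    by (subst sum.atMost_Suc_shift) simp
  finally have lower: "(\<Sum>i\<le>k. of_nat (k choose i) * A i (Suc k - i))
      = A 0 (Suc k) + (\<Sum>i\<le>k. of_nat (k choose Suc i) * A (Suc i) (k - i))" .
  have "(\<Sum>i\<le>Suc k. of_nat (Suc k choose i) * A i (Suc k - i))
      = A 0 (Suc k) + (\<Sum>i\<le>k. of_nat (Suc k choose Suc i) * A (Suc i) (k - i))"
    by (subst sum.atMost_Suc_shift) simp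
  also have "\<dots> = A 0 (Suc k) + (\<Sum>i\<le>k. of_nat (k choose i) * A (Suc i) (k - i))
      + (\<Sum>i\<le>k. of_nat (k choose Suc i) * A (Suc i) (k - i))"
    by (simp add: sum.distrib ring_distribs)
  finally show ?thesis using lower by simp
qed

definition commutator :: "'a::comm_ring_1 \<Rightarrow> ('a \<Rightarrow> 'a) \<Rightarrow> 'a \<Rightarrow> 'a" where
  "commutator a G = (\<lambda>x. G (a * x) - a * G x)"

lemma funpow_commutator_expand:
  "(commutator a ^^ k) G x = (\<Sum>i\<le>k. of_nat (k choose i) * ((-a) ^ (k - i) * G (a ^ i * x)))"
proof (induction k arbitrary: x)
  case 0
  then show ?case by simp
next
  case (Suc k)
  have "(commutator a ^^ Suc k) G x = (commutator a ^^ k) G (a * x) - a * (commutator a ^^ k) G x"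
    by (simp add: commutator_def)
  also have "\<dots> = (\<Sum>i\<le>k. of_nat (k choose i) * ((-a) ^ (k - i) * G (a ^ Suc i * x)))
      + (\<Sum>i\<le>k. of_nat (k choose i) * ((-a) ^ (Suc k - i) * G (a ^ i * x)))"
    unfolding Suc by (simp add: sum_distrib_left Suc_diff_le mult_ac sum_negf)
  also have "\<dots> = (\<Sum>i\<le>Suc k. of_nat (Suc k choose i) * ((-a) ^ (Suc k - i) * G (a ^ i * x)))"
    using binomial_sum_pascal_step[of k "\<lambda>i j. (-a) ^ j * G (a ^ i * x)"] by simp
  finally show ?case .
qed

lemma commutator_commute: "commutator a (commutator b H) = commutator b (commutator a H)"
  unfolding commutator_def by (rule ext) (simp add: algebra_simps)

lemma commutator_funpow_commute:
  "commutator a ((commutator b ^^ j) H) = (commutator b ^^ j) (commutator a H)"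
proof (induction j)
  case (Suc j)
  have "commutator a ((commutator b ^^ Suc j) H) = commutator b (commutator a ((commutator b ^^ j) H))"
    by (simp add: commutator_commute)
  then show ?case using Suc by simp
qed simp

lemma commutator_one: "commutator 1 G = (\<lambda>x. 0)"
  unfolding commutator_def by simp

lemma additive_map_zero: "additive_map G \<Longrightarrow> G 0 = 0"
  unfolding additive_map_def by (metis add.right_neutral add_cancel_right_right)

lemma additive_map_of_nat_mult: "additive_map G \<Longrightarrow> G (of_nat t * y) = of_nat t * G y"
  by (induction t) (simp_all add: additive_map_zero additive_map_def ring_distribs)

lemma additive_map_sum: "additive_map G \<Longrightarrow> G (\<Sum>i\<in>I. f i) = (\<Sum>i\<in>I. G (f i))"
  by (induction I rule: infinite_finite_induct) (simp_all add: additive_map_zero additive_map_def)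

lemma additive_map_commutator: "additive_map G \<Longrightarrow> additive_map (commutator a G)"
  unfolding additive_map_def commutator_def by (simp add: ring_distribs)

lemma additive_map_funpow_commutator: "additive_map G \<Longrightarrow> additive_map ((commutator a ^^ k) G)"
  by (induction k) (auto intro: additive_map_commutator)

lemma funpow_commutator_at_one:
  "(commutator a ^^ Suc n) F 1 = (-a) ^ Suc n * F 1 +
     (F (a ^ (n + 1)) - (\<Sum>i = 1..n. of_nat ((n + 1) choose i) * (-1) ^ (n - i) * a ^ (n + 1 - i) * F (a ^ i)))"
proof -
  have "(commutator a ^^ Suc n) F 1
      = (\<Sum>i\<le>n. of_nat (Suc n choose i) * ((-a) ^ (Suc n - i) * F (a ^ i))) + F (a ^ Suc n)"
    unfolding funpow_commutator_expand by simp
  also have "(\<Sum>i\<le>n. of_nat (Suc n choose i) * ((-a) ^ (Suc n - i) * F (a ^ i)))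
      = (-a) ^ Suc n * F 1 + (\<Sum>i=1..n. of_nat (Suc n choose i) * ((-a) ^ (Suc n - i) * F (a ^ i)))"
    by (simp add: atMost_atLeast0 sum.atLeast_Suc_atMost)
  also have "(\<Sum>i=1..n. of_nat (Suc n choose i) * ((-a) ^ (Suc n - i) * F (a ^ i)))
     = - (\<Sum>i = 1..n. of_nat ((n + 1) choose i) * (-1) ^ (n - i) * a ^ (n + 1 - i) * F (a ^ i))"
    unfolding sum_negf[symmetric]
  proof (rule sum.cong)
    fix i assume "i \<in> {1..n}"
    then have "Suc n - i = Suc (n - i)" by auto
    then show "of_nat (Suc n choose i) * ((-a) ^ (Suc n - i) * F (a ^ i)) =
       - (of_nat ((n + 1) choose i) * (-1) ^ (n - i) * a ^ (n + 1 - i) * F (a ^ i))"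
      by (simp add: power_minus[of a])
  qed simp
  finally show ?thesis by simp
qed

lemma Dset_iff_commutator:
  assumes "F 1 = 0"
  shows "F \<in> Dset n \<longleftrightarrow> additive_map F \<and> (\<forall>a. (commutator a ^^ Suc n) F 1 = 0)"
proof -
  have "(commutator a ^^ Suc n) F 1 = 0 \<longleftrightarrow>
      F (a ^ (n + 1)) = (\<Sum>i = 1..n. of_nat ((n + 1) choose i) * (-1) ^ (n - i) * a ^ (n + 1 - i) * F (a ^ i))" for a
    using funpow_commutator_at_one[where a = a and n = n and F = F] assms by simp
  then show ?thesis unfolding Dset_def by auto
qed

lemma Dset_imp_one_eq_zero:
  assumes "F \<in> Dset n"
  shows "F 1 = 0"
proof -
  have "F (1 ^ (n + 1)) = (\<Sum>i = 1..n. of_nat ((n + 1) choose i) * (-1) ^ (n - i) * 1 ^ (n + 1 - i) * F (1 ^ i))"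
    using assms unfolding Dset_def by blast
  then have "(-1::complex) ^ Suc n * F 1 = 0"
    using funpow_commutator_at_one[where a = 1 and n = n and F = F] by (simp add: commutator_one)
  then show ?thesis by simp
qed

lemma funpow_commutator_add_of_nat_mult:
  assumes G: "additive_map G"
  shows "(commutator (a + of_nat t * b) ^^ N) G x =
     (\<Sum>k\<le>N. of_nat (N choose k) * (of_nat t ^ k * (commutator b ^^ k) ((commutator a ^^ (N - k)) G) x))"
proof (induction N arbitrary: x)
  case 0
  then show ?case by simp
next
  case (Suc N)
  define c where "c = a + of_nat t * b"
  define B where "B j m = (commutator b ^^ j) ((commutator a ^^ m) G)" for j m
  have B_additive: "additive_map (B j m)" for j m
    unfolding B_def by (intro additive_map_funpow_commutator G)
  have commutator_a_B: "commutator a (B j m) = B j (Suc m)" for j m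
    unfolding B_def by (simp add: commutator_funpow_commute)
  have commutator_b_B: "commutator b (B j m) = B (Suc j) m" for j m
    unfolding B_def by simp
  have commutator_c_B: "B k m (c * x) - c * B k m x = B k (Suc m) x + of_nat t * B (Suc k) m x" for k m
  proof -
    have "B k m (c * x) = B k m (a * x) + of_nat t * B k m (b * x)"
      using B_additive[of k m] additive_map_of_nat_mult[OF B_additive[of k m]]
      unfolding c_def additive_map_def by (simp add: ring_distribs mult.assoc)
    then show ?thesis
      using fun_cong[OF commutator_a_B[of k m], of x] fun_cong[OF commutator_b_B[of k m], of x]
      by (simp add: commutator_def c_def algebra_simps)
  qed
  have "(commutator c ^^ Suc N) G x = (commutator c ^^ N) G (c * x) - c * (commutator c ^^ N) G x"
    by (simp add: commutator_def)
  also have "\<dots> = (\<Sum>k\<le>N. of_nat (N choose k) * (of_nat t ^ k * (B k (N - k) (c * x) - c * B k (N - k) x)))"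
    unfolding Suc[folded c_def] B_def by (simp add: sum_distrib_left sum_subtractf algebra_simps)
  also have "\<dots> = (\<Sum>k\<le>N. of_nat (N choose k) * (of_nat t ^ (Suc k) * B (Suc k) (N - k) x))
      + (\<Sum>k\<le>N. of_nat (N choose k) * (of_nat t ^ k * B k (Suc N - k) x))"
    unfolding commutator_c_B by (simp add: sum.distrib algebra_simps Suc_diff_le)
  also have "\<dots> = (\<Sum>k\<le>Suc N. of_nat (Suc N choose k) * (of_nat t ^ k * B k (Suc N - k) x))"
    using binomial_sum_pascal_step[of N "\<lambda>i j. of_nat t ^ i * B i j x"] by simp
  finally show ?case unfolding B_def c_def .
qed

lemma commutator_polarization:
  assumes G: "additive_map G" and vanish: "\<And>y. (commutator y ^^ N) G 1 = 0" and N: "N \<ge> 1"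
  shows "commutator b ((commutator a ^^ (N - 1)) G) 1 = 0"
proof -
  define c where "c k = of_nat (N choose k) * (commutator b ^^ k) ((commutator a ^^ (N - k)) G) 1" for k
  have roots: "range of_nat \<subseteq> {z. (\<Sum>k\<le>N. c k * z ^ k) = 0}"
  proof
    fix z assume "z \<in> range (of_nat :: nat \<Rightarrow> complex)"
    then obtain t where "z = of_nat t" by auto
    then show "z \<in> {z. (\<Sum>k\<le>N. c k * z ^ k) = 0}"
      using funpow_commutator_add_of_nat_mult[OF G, where a = a and t = t and b = b and N = N and x = 1]
        vanish[of "a + of_nat t * b"]
      unfolding c_def by (simp add: mult_ac)
  qed
  have "infinite (range (of_nat :: nat \<Rightarrow> complex))"
    using infinite_UNIV_char_0 finite_imageD inj_of_nat by blast
  then have "infinite {z. (\<Sum>k\<le>N. c k * z ^ k) = 0}"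
    using roots finite_subset by blast
  then have "c 1 = 0" using polyfun_roots_finite[of c 1 N] N by blast
  then show ?thesis unfolding c_def using N by simp
qed

lemma Dset_subset_Dset_Suc: "Dset n \<subseteq> Dset (Suc n)"
proof
  fix F assume F: "F \<in> Dset n"
  have F1: "F 1 = 0" using Dset_imp_one_eq_zero[OF F] .
  have additive: "additive_map F" and vanish: "\<And>y. (commutator y ^^ Suc n) F 1 = 0"
    using F Dset_iff_commutator[where F = F and n = n, OF F1] by auto
  have "(commutator a ^^ Suc (Suc n)) F 1 = 0" for a
  proof -
    define G where "G = (commutator a ^^ n) F"
    have linear: "commutator b G 1 = 0" for b
      using commutator_polarization[OF additive vanish, of b a] unfolding G_def by simp
    have "G (a * a) = a * a * G 1" and "G a = a * G 1"
      using linear[of "a * a"] linear[of a] by (simp_all add: commutator_def)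
    then have "commutator a (commutator a G) 1 = 0"
      by (simp add: commutator_def algebra_simps)
    then show ?thesis unfolding G_def by simp
  qed
  then show "F \<in> Dset (Suc n)" using Dset_iff_commutator[where F = F and n = "Suc n", OF F1] additive by simp
qed

lemma derivation_additive: "derivation D \<Longrightarrow> additive_map D"
  unfolding derivation_def by simp

lemma derivation_one: "derivation D \<Longrightarrow> D 1 = 0"
  unfolding derivation_def by (metis add_cancel_right_right mult_1)

lemma additive_map_funpow_derivation: "derivation D \<Longrightarrow> additive_map (D ^^ k)"
proof (induction k)
  case (Suc k)
  then show ?case using derivation_additive[OF Suc.prems] unfolding additive_map_def by simp
qed (simp add: additive_map_def)

lemma funpow_derivation_one: "derivation D \<Longrightarrow> (D ^^ Suc k) 1 = 0"
  using derivation_one[of D] additive_map_zero[OF additive_map_funpow_derivation[of D k]]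
  by (simp add: funpow_Suc_right del: funpow.simps)

lemma funpow_derivation_mult:
  assumes D: "derivation D"
  shows "(D ^^ p) (a * x) = (\<Sum>j\<le>p. of_nat (p choose j) * ((D ^^ j) a * (D ^^ (p - j)) x))"
proof (induction p)
  case 0
  then show ?case by simp
next
  case (Suc p)
  have additive: "additive_map D" using derivation_additive[OF D] .
  have product_rule: "D (u * v) = u * D v + v * D u" for u v
    using D unfolding derivation_def by blast
  have "(D ^^ Suc p) (a * x) = (\<Sum>j\<le>p. of_nat (p choose j) * D ((D ^^ j) a * (D ^^ (p - j)) x))"
    using Suc by (simp add: additive_map_sum[OF additive] additive_map_of_nat_mult[OF additive])
  also have "\<dots> = (\<Sum>j\<le>p. of_nat (p choose j) * ((D ^^ Suc j) a * (D ^^ (p - j)) x))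
     + (\<Sum>j\<le>p. of_nat (p choose j) * ((D ^^ j) a * (D ^^ (Suc p - j)) x))"
    by (simp add: product_rule sum.distrib ring_distribs Suc_diff_le mult_ac)
  also have "\<dots> = (\<Sum>j\<le>Suc p. of_nat (Suc p choose j) * ((D ^^ j) a * (D ^^ (Suc p - j)) x))"
    using binomial_sum_pascal_step[of p "\<lambda>i j. (D ^^ i) a * (D ^^ j) x"] by simp
  finally show ?case .
qed

definition iterate_comb :: "(complex \<Rightarrow> complex) \<Rightarrow> nat \<Rightarrow> (complex \<Rightarrow> complex) \<Rightarrow> bool" where
  "iterate_comb D r H \<longleftrightarrow> (\<exists>b. \<forall>x. H x = (\<Sum>p<r. b p * (D ^^ p) x))"

lemma iterate_comb_zero: "iterate_comb D r (\<lambda>x. 0)"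
  unfolding iterate_comb_def by (rule exI[of _ "\<lambda>_. 0"]) simp

lemma iterate_comb_add:
  assumes "iterate_comb D r H1" and "iterate_comb D r H2"
  shows "iterate_comb D r (\<lambda>x. H1 x + H2 x)"
proof -
  obtain b1 b2 where "\<And>x. H1 x = (\<Sum>p<r. b1 p * (D ^^ p) x)" "\<And>x. H2 x = (\<Sum>p<r. b2 p * (D ^^ p) x)"
    using assms unfolding iterate_comb_def by blast
  then show ?thesis unfolding iterate_comb_def
    by (intro exI[of _ "\<lambda>p. b1 p + b2 p"]) (simp add: sum.distrib distrib_right)
qed

lemma iterate_comb_scale:
  assumes "iterate_comb D r H"
  shows "iterate_comb D r (\<lambda>x. c * H x)"
proof -
  obtain b where "\<And>x. H x = (\<Sum>p<r. b p * (D ^^ p) x)" using assms unfolding iterate_comb_def by blast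
  then show ?thesis unfolding iterate_comb_def
    by (intro exI[of _ "\<lambda>p. c * b p"]) (simp add: sum_distrib_left mult.assoc)
qed

lemma iterate_comb_mono:
  assumes H: "iterate_comb D r H" and "r \<le> s"
  shows "iterate_comb D s H"
proof -
  obtain b where b: "\<And>x. H x = (\<Sum>p<r. b p * (D ^^ p) x)" using H unfolding iterate_comb_def by blast
  have extend: "(\<Sum>p<s. (if p < r then b p else 0) * (D ^^ p) x) = H x" for x
    unfolding b using \<open>r \<le> s\<close> by (intro sum.mono_neutral_cong_right) auto
  show ?thesis unfolding iterate_comb_def
    by (intro exI[of _ "\<lambda>p. if p < r then b p else 0"]) (simp add: extend)
qed

lemma iterate_comb_funpow:
  assumes "p < r"
  shows "iterate_comb D r (\<lambda>x. c * (D ^^ p) x)"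
proof -
  have single: "(\<Sum>i<r. (if i = p then c else 0) * (D ^^ i) x) = c * (D ^^ p) x" for x
    using assms by (simp add: if_distrib[of "\<lambda>b. b * _"] sum.delta cong: if_cong)
  show ?thesis unfolding iterate_comb_def
    by (intro exI[of _ "\<lambda>i. if i = p then c else 0"]) (simp add: single)
qed

lemma iterate_comb_sum:
  "finite I \<Longrightarrow> (\<And>i. i \<in> I \<Longrightarrow> iterate_comb D r (H i)) \<Longrightarrow> iterate_comb D r (\<lambda>x. \<Sum>i\<in>I. H i x)"
  by (induction I rule: finite_induct) (simp_all add: iterate_comb_zero iterate_comb_add)

lemma iterate_comb_0: "iterate_comb D 0 H \<Longrightarrow> H = (\<lambda>x. 0)"
  unfolding iterate_comb_def by auto

lemma iterate_comb_commutator_funpow_derivation: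
  assumes "derivation D"
  shows "iterate_comb D p (commutator a (D ^^ p))"
proof -
  have "commutator a (D ^^ p) = (\<lambda>x. \<Sum>j\<in>{1..p}. (of_nat (p choose j) * (D ^^ j) a) * (D ^^ (p - j)) x)"
    unfolding commutator_def funpow_derivation_mult[OF assms]
    by (rule ext) (simp add: atMost_atLeast0 sum.atLeast_Suc_atMost mult.assoc)
  then show ?thesis
    by (auto intro!: iterate_comb_sum iterate_comb_funpow)
qed

lemma iterate_comb_commutator_funpow_derivation_leading:
  assumes D: "derivation D" and q: "q \<ge> 1"
  shows "iterate_comb D (q - 1) (\<lambda>x. commutator a (D ^^ q) x - of_nat q * D a * (D ^^ (q - 1)) x)"
proof -
  have "commutator a (D ^^ q) x - of_nat q * D a * (D ^^ (q - 1)) x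
       = (\<Sum>j\<in>{2..q}. (of_nat (q choose j) * (D ^^ j) a) * (D ^^ (q - j)) x)" for x
    unfolding commutator_def funpow_derivation_mult[OF D] using q
    by (simp add: atMost_atLeast0 sum.atLeast_Suc_atMost mult.assoc numeral_2_eq_2)
  then show ?thesis
    by (simp only:) (auto intro!: iterate_comb_sum iterate_comb_funpow)
qed

lemma iterate_comb_commutator:
  assumes D: "derivation D" and R: "iterate_comb D r R"
  shows "iterate_comb D (r - 1) (commutator a R)"
proof -
  obtain b where b: "\<And>x. R x = (\<Sum>p<r. b p * (D ^^ p) x)" using R unfolding iterate_comb_def by blast
  have "commutator a R = (\<lambda>x. \<Sum>p<r. b p * commutator a (D ^^ p) x)"
    unfolding commutator_def b by (rule ext) (simp add: sum_distrib_left sum_subtractf algebra_simps)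
  then show ?thesis
    by (auto intro!: iterate_comb_sum iterate_comb_scale
        iterate_comb_mono[OF iterate_comb_commutator_funpow_derivation[OF D]])
qed

lemma funpow_commutator_funpow_derivation:
  assumes D: "derivation D" and "k \<le> m"
  shows "iterate_comb D (m - k)
    (\<lambda>x. (commutator a ^^ k) (D ^^ m) x - (\<Prod>i<k. of_nat (m - i)) * D a ^ k * (D ^^ (m - k)) x)"
  using \<open>k \<le> m\<close>
proof (induction k)
  case 0
  show ?case by (simp add: iterate_comb_zero)
next
  case (Suc k)
  define q where "q = m - k"
  have q: "q \<ge> 1" "m - Suc k = q - 1" using Suc.prems unfolding q_def by auto
  define c where "c = (\<Prod>i<k. of_nat (m - i)) * D a ^ k"
  define H where "H = (commutator a ^^ k) (D ^^ m)"
  have coeff: "(\<Prod>i<Suc k. of_nat (m - i)) * D a ^ Suc k = c * (of_nat q * D a)"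
    unfolding c_def q_def by (simp add: mult_ac)
  have H_Suc: "(commutator a ^^ Suc k) (D ^^ m) = commutator a H"
    unfolding H_def by simp
  have R: "iterate_comb D q (\<lambda>x. H x - c * (D ^^ q) x)"
    using Suc unfolding H_def c_def q_def by simp
  have "(\<lambda>x. (commutator a ^^ Suc k) (D ^^ m) x - (\<Prod>i<Suc k. of_nat (m - i)) * D a ^ Suc k * (D ^^ (m - Suc k)) x)
    = (\<lambda>x. c * (commutator a (D ^^ q) x - of_nat q * D a * (D ^^ (q - 1)) x)
        + commutator a (\<lambda>x. H x - c * (D ^^ q) x) x)"
    unfolding coeff H_Suc q(2) by (rule ext) (simp add: commutator_def algebra_simps)
  moreover have "iterate_comb D (m - Suc k) \<dots>"
    unfolding q(2)
    by (intro iterate_comb_add iterate_comb_scale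
        iterate_comb_commutator_funpow_derivation_leading[OF D q(1)] iterate_comb_commutator[OF D R])
  ultimately show ?case by (simp only:)
qed

lemma funpow_commutator_funpow_derivation_eq:
  assumes "derivation D"
  shows "(commutator a ^^ m) (D ^^ m) = (\<lambda>x. fact m * D a ^ m * x)"
proof -
  have "(\<Prod>i<m. of_nat (m - i)) = (fact m :: complex)"
    unfolding fact_prod_rev of_nat_prod atLeast0LessThan ..
  then have "iterate_comb D 0 (\<lambda>x. (commutator a ^^ m) (D ^^ m) x - fact m * D a ^ m * x)"
    using funpow_commutator_funpow_derivation[OF assms order.refl, of m a] by simp
  then show ?thesis by (auto dest: iterate_comb_0 simp: fun_eq_iff)
qed

theorem proposition4p4:
  fixes n :: nat and D :: "complex \<Rightarrow> complex"
  assumes "n \<ge> 1"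
  shows "Dset n \<subseteq> Dset (n + 1) \<and>
    (derivation D \<and> D \<noteq> (\<lambda>x. 0) \<longrightarrow> (D ^^ (n + 1)) \<in> Dset (n + 1) - Dset n)"
proof (intro conjI impI)
  \<comment> \<open>Neither part needs \<open>n \<ge> 1\<close>.\<close>
  show "Dset n \<subseteq> Dset (n + 1)" using Dset_subset_Dset_Suc by simp
next
  assume "derivation D \<and> D \<noteq> (\<lambda>x. 0)"
  then obtain a0 where D: "derivation D" and "D a0 \<noteq> 0" by auto
  define F where "F = D ^^ Suc n"
  have F1: "F 1 = 0" unfolding F_def using funpow_derivation_one[OF D] .
  have additive: "additive_map F" unfolding F_def using additive_map_funpow_derivation[OF D] .
  have "(commutator a ^^ Suc (Suc n)) F 1 = 0" for a
  proof -
    have "commutator a ((commutator a ^^ Suc n) F) 1 = 0"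
      using funpow_commutator_funpow_derivation_eq[OF D, where a = a and m = "Suc n"]
      unfolding F_def by (simp add: commutator_def del: funpow.simps)
    then show ?thesis by simp
  qed
  then have "F \<in> Dset (n + 1)" using Dset_iff_commutator[where F = F and n = "n + 1", OF F1] additive by simp
  moreover have "(commutator a0 ^^ Suc n) F 1 \<noteq> 0"
    using funpow_commutator_funpow_derivation_eq[OF D, where a = a0 and m = "Suc n"] \<open>D a0 \<noteq> 0\<close>
    unfolding F_def by (simp del: funpow.simps fact_Suc)
  then have "F \<notin> Dset n" using Dset_iff_commutator[where F = F and n = n, OF F1] by blast
  ultimately show "(D ^^ (n + 1)) \<in> Dset (n + 1) - Dset n" unfolding F_def by simp
qed

end
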